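(* Let $m\ge 1$ be an integer and $S>1$. For $j=1,\ldots,2m$ put $\theta_j=\pi(j-1/2)/m$, \[ z_j=\frac{S e^{i\theta_j}+S^{-1}e^{-i\theta_j}}{S+S^{-1}},\qquad w_j=\frac{1}{2m}\,\frac{S e^{i\theta_j}-S^{-1}e^{-i\theta_j}}{S+S^{-1}}, \] and define the rational function $r_m^{(T)}(z)=\sum_{j=1}^{2m}\frac{w_j}{z_j-z}$. Let \[ \alpha=\frac{S^{2m}+S^{-2m}}{S^{2m}-S^{-2m}},\qquad \beta=\frac{2}{S^{2m}-S^{-2m}}. \] Then \[ r_m^{(T)}(z)=\frac{1}{\alpha+\beta\,T_{2m}\!\left(\frac{S+S^{-1}}{2}z\right)}=\frac{1}{(\alpha-\beta)+2\beta\,T_m\!\left(\frac{S+S^{-1}}{2}z\right)^2}, \] where $T_j(z)=\cos(j\arccos z)$ is the Chebyshev polynomial of the first kind of degree $j$. Consequently $r_m^{(T)}$ is a rational function of exact type $(0,2m)$ (numerator degree $0$, denominator degree $2m$), and on the interval $[-2/(S+S^{-1}),\,2/(S+S^{-1})]$ it equioscillates $2m+1$ times, alternating between the values $(\alpha+\beta)^{-1}$ and $(\alpha-\beta)^{-1}$.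
   Context: The function $r_m^{(T)}$ arises as the trapezoid-rule approximation, with $2m$ equispaced nodes in $\theta\in[0,2\pi)$, of the contour integral $\frac{1}{2\pi i}\int_{\Gamma_S}\frac{d\gamma}{\gamma-z}$ over the ellipse $\Gamma_S=\{\gamma(\theta)=\frac{Se^{i\theta}+S^{-1}e^{-i\theta}}{S+S^{-1}}:\theta\in[0,2\pi)\}$. A rational function is of type $(\mu,\nu)$ if it is a quotient of a polynomial of degree at most $\mu$ by a polynomial of degree at most $\nu$. *)

theory Defs
  imports "HOL-Analysis.Analysis" "HOL-Computational_Algebra.Polynomial"
begin

definition thetaT :: "nat \<Rightarrow> nat \<Rightarrow> real" where
  "thetaT m j = pi * (real j - 1/2) / real m"

definition zT :: "real \<Rightarrow> nat \<Rightarrow> nat \<Rightarrow> complex" where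
  "zT S m j = (of_real S * exp (\<i> * of_real (thetaT m j)) + of_real (1/S) * exp (- \<i> * of_real (thetaT m j)))
              / of_real (S + 1/S)"

definition wT :: "real \<Rightarrow> nat \<Rightarrow> nat \<Rightarrow> complex" where
  "wT S m j = (1 / of_nat (2*m)) *
     ((of_real S * exp (\<i> * of_real (thetaT m j)) - of_real (1/S) * exp (- \<i> * of_real (thetaT m j)))
      / of_real (S + 1/S))"

definition rT :: "real \<Rightarrow> nat \<Rightarrow> complex \<Rightarrow> complex" where
  "rT S m z = (\<Sum>j=1..2*m. wT S m j / (zT S m j - z))"

definition alphaT :: "real \<Rightarrow> nat \<Rightarrow> real" where
  "alphaT S m = (S ^ (2*m) + (1/S) ^ (2*m)) / (S ^ (2*m) - (1/S) ^ (2*m))"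

definition betaT :: "real \<Rightarrow> nat \<Rightarrow> real" where
  "betaT S m = 2 / (S ^ (2*m) - (1/S) ^ (2*m))"

definition chebT :: "nat \<Rightarrow> complex \<Rightarrow> complex" where
  "chebT j z = cos (of_nat j * Arccos z)"

end

theory Submission
  imports Defs
begin

(* Substitute z = (zeta + 1/zeta) / (S + 1/S) and put a_j = S e^(i theta_j).  Each term
   w_j / (z_j - z) splits into the partial fractions (1/(2m)) (1/(1 - zeta/a_j) - 1/(1 - a_j zeta)).
   The e^(i theta_j) are the 2m roots of -1, so sum_j 1/(1 - x e^(i theta_j)) = 2m / (1 + x^(2m)),
   and r_m^(T)(z) collapses to 1/(1 + Z/A) - 1/(1 + A Z) with A = S^(2m), Z = zeta^(2m).  This is
   1/(alpha + beta (Z + 1/Z)/2), and (Z + 1/Z)/2 = T_2m((S + 1/S) z / 2) by the Joukowski form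
   T_n((zeta + 1/zeta)/2) = (zeta^n + zeta^-n)/2.  On the interval the argument of T_2m lies in
   [-1, 1], so the denominator ranges over [alpha - beta, alpha + beta] and reaches both ends
   alternately at the 2m + 1 Chebyshev extrema. *)

fun cheb_poly :: "nat \<Rightarrow> 'a::comm_ring_1 poly" where
  "cheb_poly 0 = 1"
| "cheb_poly (Suc 0) = [:0, 1:]"
| "cheb_poly (Suc (Suc n)) = smult 2 (pCons 0 (cheb_poly (Suc n))) - cheb_poly n"

lemma poly_cheb_poly_joukowski:
  fixes \<zeta> :: "'a::field_char_0"
  assumes "\<zeta> \<noteq> 0"
  shows "poly (cheb_poly n) ((\<zeta> + 1/\<zeta>)/2) = (\<zeta>^n + (1/\<zeta>)^n)/2"
proof (induction n rule: cheb_poly.induct)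
  case (3 n)
  have rec: "poly (cheb_poly (Suc (Suc n))) w = 2 * w * poly (cheb_poly (Suc n)) w - poly (cheb_poly n) w"
    for w :: 'a
    by simp
  show ?case
    unfolding rec "3.IH" using assms by (simp add: field_simps)
next
  case 1 show ?case by simp
next
  case 2 show ?case by simp
qed

lemma degree_cheb_poly: "degree (cheb_poly n :: 'a::{idom, ring_char_0} poly) = n"
proof (induction n rule: cheb_poly.induct)
  case (3 n)
  define p :: "'a poly" where "p = smult 2 (pCons 0 (cheb_poly (Suc n)))"
  have "cheb_poly (Suc n) \<noteq> (0 :: 'a poly)"
    using "3.IH"(1) by (metis degree_0 nat.distinct(1))
  then have "degree p = Suc (Suc n)"
    using "3.IH"(1) by (simp add: p_def)
  moreover have "degree (p + - cheb_poly n) = degree p"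
    using "3.IH"(2) \<open>degree p = Suc (Suc n)\<close> by (intro degree_add_eq_left) simp
  ultimately show ?case
    by (simp add: p_def)
qed simp_all

lemma cos_eq_joukowski: "cos w = (exp (\<i> * w) + 1 / exp (\<i> * w)) / 2"
  unfolding cos_exp_eq by (simp add: exp_minus inverse_eq_divide)

lemma joukowski_surj: "\<exists>\<zeta>::complex. \<zeta> \<noteq> 0 \<and> w = (\<zeta> + 1/\<zeta>)/2"
  by (metis cos_Arccos cos_eq_joukowski exp_not_eq_zero)

lemma chebT_eq_poly_cheb_poly: "chebT n w = poly (cheb_poly n) w"
proof -
  define \<zeta> where "\<zeta> = exp (\<i> * Arccos w)"
  have "\<zeta> \<noteq> 0" by (simp add: \<zeta>_def)
  have w: "w = (\<zeta> + 1/\<zeta>)/2"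
    unfolding \<zeta>_def by (metis cos_Arccos cos_eq_joukowski)
  have "exp (\<i> * (of_nat n * Arccos w)) = \<zeta>^n"
    by (simp add: \<zeta>_def exp_of_nat_mult[symmetric] mult_ac)
  then have "chebT n w = (\<zeta>^n + (1/\<zeta>)^n)/2"
    unfolding chebT_def cos_eq_joukowski[of "of_nat n * Arccos w"] by (simp add: power_one_over)
  also have "\<dots> = poly (cheb_poly n) w"
    by (subst w) (rule poly_cheb_poly_joukowski[OF \<open>\<zeta> \<noteq> 0\<close>, symmetric])
  finally show ?thesis .
qed

lemma chebT_joukowski: "\<zeta> \<noteq> 0 \<Longrightarrow> chebT n ((\<zeta> + 1/\<zeta>)/2) = (\<zeta>^n + (1/\<zeta>)^n)/2"
  by (simp add: chebT_eq_poly_cheb_poly poly_cheb_poly_joukowski)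

lemma chebT_double: "chebT (2*m) w = 2 * (chebT m w)^2 - 1"
proof -
  obtain \<zeta> :: complex where "\<zeta> \<noteq> 0" and w: "w = (\<zeta> + 1/\<zeta>)/2"
    using joukowski_surj by blast
  define p q where "p = \<zeta>^m" and "q = (1/\<zeta>)^m"
  have "p * q = 1" using \<open>\<zeta> \<noteq> 0\<close> by (simp add: p_def q_def power_one_over)
  have "chebT (2*m) w = (p^2 + q^2)/2"
    unfolding w chebT_joukowski[OF \<open>\<zeta> \<noteq> 0\<close>] by (simp add: p_def q_def power_mult mult.commute)
  also have "\<dots> = 2 * ((p + q)/2)^2 - 1"
    using \<open>p * q = 1\<close> by (simp add: power2_eq_square field_simps)
  also have "\<dots> = 2 * (chebT m w)^2 - 1"
    unfolding w chebT_joukowski[OF \<open>\<zeta> \<noteq> 0\<close>] by (simp add: p_def q_def)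
  finally show ?thesis .
qed

lemma chebT_of_real:
  assumes "\<bar>x\<bar> \<le> 1"
  shows "chebT n (of_real x) = of_real (cos (real n * arccos x))"
  using assms by (simp add: chebT_def of_real_arccos cos_of_real[symmetric])

lemma partial_fraction_joukowski:
  fixes a \<zeta> K :: "'a::field"
  assumes "a \<noteq> 0" "\<zeta> \<noteq> 0" "a \<noteq> \<zeta>" "a * \<zeta> \<noteq> 1" "K \<noteq> 0"
  shows "((a - 1/a)/K) / ((a + 1/a)/K - (\<zeta> + 1/\<zeta>)/K) = 1/(1 - \<zeta>/a) - 1/(1 - a*\<zeta>)"
proof -
  define P where "P = (a - \<zeta>) * (a * \<zeta> - 1)"
  have "P \<noteq> 0" using assms by (simp add: P_def)
  have denominator: "(a + 1/a)/K - (\<zeta> + 1/\<zeta>)/K = P / (a * \<zeta> * K)"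
    using assms by (simp add: P_def field_simps)
  have "((a - 1/a)/K) / ((a + 1/a)/K - (\<zeta> + 1/\<zeta>)/K) = \<zeta> * (a * a - 1) / P"
    unfolding denominator using assms \<open>P \<noteq> 0\<close> by (simp add: field_simps)
  also have "\<dots> = 1/(1 - \<zeta>/a) - 1/(1 - a*\<zeta>)"
    using assms by (simp add: P_def field_simps) (metis minus_diff_eq minus_divide_divide)
  finally show ?thesis .
qed

lemma difference_of_reciprocals_eq:
  fixes A Z :: "'a::field_char_0"
  assumes "A \<noteq> 0" "A * A \<noteq> 1" "Z \<noteq> 0" "1 + Z/A \<noteq> 0" "1 + A*Z \<noteq> 0"
  shows "1/(1 + Z/A) - 1/(1 + A*Z) = 1/((A + 1/A)/(A - 1/A) + 2/(A - 1/A) * ((Z + 1/Z)/2))"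
    and "(A + 1/A)/(A - 1/A) + 2/(A - 1/A) * ((Z + 1/Z)/2) \<noteq> 0"
proof -
  define D where "D = A - 1/A"
  have "D \<noteq> 0" using assms by (simp add: D_def field_simps)
  have "(A + 1/A)/D + 2/D * ((Z + 1/Z)/2) = (A + 1/A + Z + 1/Z)/D"
    by (simp add: add_divide_distrib)
  also have "A + 1/A + Z + 1/Z = (1 + Z/A) * (1 + A*Z) / Z"
    using assms by (simp add: field_simps)
  finally have E: "(A + 1/A)/D + 2/D * ((Z + 1/Z)/2) = (1 + Z/A) * (1 + A*Z) / (Z * D)"
    by simp
  have "1/(1 + Z/A) - 1/(1 + A*Z) = ((1 + A*Z) - (1 + Z/A)) / ((1 + Z/A) * (1 + A*Z))"
    using assms by (simp add: divide_simps)
  also have "(1 + A*Z) - (1 + Z/A) = Z * D"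
    by (simp add: D_def algebra_simps)
  finally show "1/(1 + Z/A) - 1/(1 + A*Z) = 1/((A + 1/A)/(A - 1/A) + 2/(A - 1/A) * ((Z + 1/Z)/2))"
    using E by (simp add: D_def)
  show "(A + 1/A)/(A - 1/A) + 2/(A - 1/A) * ((Z + 1/Z)/2) \<noteq> 0"
    using E assms \<open>D \<noteq> 0\<close> by (simp add: D_def)
qed

lemma sum_inverse_one_minus_mult_roots:
  fixes \<omega> :: "'b \<Rightarrow> 'a::field"
  assumes "finite J" "card J = N"
    and power_eq: "\<And>j. j \<in> J \<Longrightarrow> \<omega> j ^ N = c"
    and power_sum: "\<And>k. 0 < k \<Longrightarrow> k < N \<Longrightarrow> (\<Sum>j\<in>J. \<omega> j ^ k) = 0"
    and "\<And>j. j \<in> J \<Longrightarrow> x * \<omega> j \<noteq> 1"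
  shows "(1 - c * x^N) * (\<Sum>j\<in>J. 1/(1 - x * \<omega> j)) = of_nat N"
proof -
  have geometric: "(1 - c * x^N) * (1/(1 - x * \<omega> j)) = (\<Sum>k<N. x^k * \<omega> j ^ k)" if "j \<in> J" for j
  proof -
    have "(\<Sum>k<N. x^k * \<omega> j ^ k) = (\<Sum>k<N. (x * \<omega> j)^k)"
      by (simp add: power_mult_distrib)
    also have "\<dots> = (1 - (x * \<omega> j)^N) / (1 - x * \<omega> j)"
      using assms(5)[OF that] by (simp add: sum_gp_strict)
    finally show ?thesis
      using power_eq[OF that] by (simp add: power_mult_distrib mult.commute)
  qed
  have "(1 - c * x^N) * (\<Sum>j\<in>J. 1/(1 - x * \<omega> j)) = (\<Sum>j\<in>J. \<Sum>k<N. x^k * \<omega> j ^ k)"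
    unfolding sum_distrib_left using geometric by (rule sum.cong[OF refl])
  also have "\<dots> = (\<Sum>k<N. x^k * (\<Sum>j\<in>J. \<omega> j ^ k))"
    by (subst sum.swap) (simp add: sum_distrib_left)
  also have "\<dots> = (\<Sum>k<N. if k = 0 then of_nat N else 0)"
    using power_sum assms(1,2) by (intro sum.cong) auto
  also have "\<dots> = of_nat N"
    using assms(1,2) by (cases N) simp_all
  finally show ?thesis .
qed

definition omegaT :: "nat \<Rightarrow> nat \<Rightarrow> complex" where
  "omegaT m j = exp (\<i> * of_real (thetaT m j))"

lemma exp_i_times_real_power: "exp (\<i> * of_real t) ^ n = exp (\<i> * of_real (real n * t))"
  by (simp add: exp_of_nat_mult[symmetric] mult_ac)

lemma exp_i_times_int_pi: "exp (\<i> * of_real (pi * of_int k)) = (if even k then 1 else -1)"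
  by (subst cis_conv_exp[symmetric]) (simp add: complex_eq_iff)

lemma omegaT_power_2m:
  assumes "m \<ge> 1"
  shows "omegaT m j ^ (2*m) = -1"
proof -
  have "real (2*m) * thetaT m j = pi * of_int (2 * int j - 1)"
    using assms by (simp add: thetaT_def field_simps)
  then show ?thesis
    unfolding omegaT_def exp_i_times_real_power by (simp only: exp_i_times_int_pi) simp
qed

lemma sum_omegaT_power:
  assumes "m \<ge> 1" "0 < k" "k < 2*m"
  shows "(\<Sum>j=1..2*m. omegaT m j ^ k) = 0"
proof -
  define b q where "b = exp (\<i> * of_real (- real k * pi / (2 * m)))"
    and "q = exp (\<i> * of_real (real k * pi / m))"
  have "omegaT m j ^ k = b * q ^ j" for j
  proof -
    have "real k * thetaT m j = - real k * pi / (2 * m) + real j * (real k * pi / m)"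
      using assms(1) by (simp add: thetaT_def field_simps)
    then show ?thesis
      unfolding omegaT_def exp_i_times_real_power b_def q_def
      by (simp only: of_real_add distrib_left exp_add)
  qed
  moreover have "q ^ (2*m) = 1"
  proof -
    have "real (2*m) * (real k * pi / m) = pi * of_int (2 * int k)"
      using assms(1) by (simp add: field_simps)
    then show ?thesis unfolding q_def exp_i_times_real_power by (simp only: exp_i_times_int_pi) simp
  qed
  moreover have "q \<noteq> 1"
  proof
    assume "q = 1"
    then obtain n :: int where "real k * pi / m = 2 * pi * of_int n"
      unfolding q_def exp_eq_1 by (auto elim!: Ints_cases)
    then have "real k = 2 * of_int n * real m"
      using assms(1) by (simp add: field_simps)
    then have "int k = 2 * n * int m"
      by (metis of_int_eq_iff of_int_mult of_int_of_nat_eq of_int_numeral)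
    moreover have "2 * n * int m \<le> 0 \<or> 2 * int m \<le> 2 * n * int m"
      by (cases "n \<le> 0") (simp_all add: mult_nonpos_nonneg mult_le_cancel_right1)
    ultimately show False
      using assms by linarith
  qed
  ultimately show ?thesis
    using assms(1) by (simp add: sum_distrib_left[symmetric] sum_gp power_Suc)
qed

lemma sum_inverse_one_minus_mult_omegaT:
  assumes "m \<ge> 1" "\<And>j. j \<in> {1..2*m} \<Longrightarrow> x * omegaT m j \<noteq> 1"
  shows "(1 + x^(2*m)) * (\<Sum>j=1..2*m. 1/(1 - x * omegaT m j)) = of_nat (2*m)"
proof -
  have "(1 - (-1) * x^(2*m)) * (\<Sum>j=1..2*m. 1/(1 - x * omegaT m j)) = of_nat (2*m)"
  proof (rule sum_inverse_one_minus_mult_roots)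
    show "(\<Sum>j=1..2*m. omegaT m j ^ k) = 0" if "0 < k" "k < 2*m" for k
      using sum_omegaT_power[OF assms(1) that] .
  qed (use assms omegaT_power_2m in auto)
  then show ?thesis by simp
qed

lemma sum_inverse_one_minus_div_omegaT:
  assumes "m \<ge> 1" "\<And>j. j \<in> {1..2*m} \<Longrightarrow> x / omegaT m j \<noteq> 1"
  shows "(1 + x^(2*m)) * (\<Sum>j=1..2*m. 1/(1 - x / omegaT m j)) = of_nat (2*m)"
proof -
  have inverse_power: "(1 / omegaT m j) ^ k = - (omegaT m j ^ (2*m - k))" if "k \<le> 2*m" for j k
  proof -
    have "omegaT m j ^ k * omegaT m j ^ (2*m - k) = -1"
      using that omegaT_power_2m[OF assms(1)] by (simp flip: power_add)
    then show ?thesis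
      by (simp add: power_one_over field_simps omegaT_def)
  qed
  have "(1 - (-1) * x^(2*m)) * (\<Sum>j=1..2*m. 1/(1 - x * (1 / omegaT m j))) = of_nat (2*m)"
  proof (rule sum_inverse_one_minus_mult_roots)
    show "(1 / omegaT m j) ^ (2*m) = -1" for j
      using inverse_power[of "2*m" j] by simp
    show "(\<Sum>j=1..2*m. (1 / omegaT m j) ^ k) = 0" if "0 < k" "k < 2*m" for k
      using that sum_omegaT_power[OF assms(1), of "2*m - k"]
      by (simp add: inverse_power sum_negf)
  qed (use assms in auto)
  then show ?thesis by simp
qed

lemma alphaT_betaT_power:
  "alphaT S m = (S^(2*m) + 1/S^(2*m)) / (S^(2*m) - 1/S^(2*m))"
  "betaT S m = 2 / (S^(2*m) - 1/S^(2*m))"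
  by (simp_all add: alphaT_def betaT_def power_one_over)

lemma betaT_pos_alphaT_gt_betaT:
  assumes "m \<ge> 1" "S > 1"
  shows "betaT S m > 0" "alphaT S m > betaT S m"
proof -
  define A where "A = S^(2*m)"
  have "A > 1" unfolding A_def using assms by (simp add: one_less_power)
  then have "A - 1/A > 0"
    by (simp add: field_simps less_1_mult)
  then show "betaT S m > 0"
    unfolding alphaT_betaT_power A_def[symmetric] by simp
  have "A + 1/A - 2 = (A - 1)^2 / A"
    using \<open>A > 1\<close> by (simp add: field_simps power2_eq_square)
  then have "A + 1/A > 2"
    using \<open>A > 1\<close> by (smt (verit) divide_pos_pos zero_less_power2)
  then show "alphaT S m > betaT S m"
    unfolding alphaT_betaT_power A_def[symmetric] using \<open>A - 1/A > 0\<close>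
    by (simp add: divide_strict_right_mono)
qed

definition rT_denom :: "real \<Rightarrow> nat \<Rightarrow> complex \<Rightarrow> complex" where
  "rT_denom S m z = of_real (alphaT S m) + of_real (betaT S m) * chebT (2*m) (of_real ((S + 1/S)/2) * z)"

lemma omegaT_nonzero: "omegaT m j \<noteq> 0"
  by (simp add: omegaT_def)

lemma zT_wT_eq:
  fixes S :: real and m j :: nat
  defines "a \<equiv> of_real S * omegaT m j"
  shows "zT S m j = (a + 1/a) / of_real (S + 1/S)"
    and "wT S m j = (1 / of_nat (2*m)) * ((a - 1/a) / of_real (S + 1/S))"
proof -
  have "of_real (1/S) * exp (- \<i> * of_real (thetaT m j)) = 1/a"
    by (simp add: a_def omegaT_def exp_minus divide_inverse inverse_mult_distrib)
  then show "zT S m j = (a + 1/a) / of_real (S + 1/S)"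
    and "wT S m j = (1 / of_nat (2*m)) * ((a - 1/a) / of_real (S + 1/S))"
    by (simp_all add: zT_def wT_def a_def omegaT_def)
qed

lemma rT_denom_zT:
  assumes "m \<ge> 1" "S > 1"
  shows "rT_denom S m (zT S m j) = 0"
proof -
  define a where "a = of_real S * omegaT m j"
  define A where "A = S^(2*m)"
  have "a \<noteq> 0" using assms by (simp add: a_def omegaT_nonzero)
  have "A > 0" using assms by (simp add: A_def)
  have "S + 1/S > 0" using assms by (simp add: add_pos_pos)
  then have "of_real ((S + 1/S)/2) * zT S m j = (a + 1/a)/2"
    by (simp add: zT_wT_eq a_def del: of_real_add)
  then have "chebT (2*m) (of_real ((S + 1/S)/2) * zT S m j) = (a^(2*m) + (1/a)^(2*m))/2"
    using chebT_joukowski[OF \<open>a \<noteq> 0\<close>] by simp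
  also have a_power: "a^(2*m) = - of_real A"
    using omegaT_power_2m[OF assms(1)] by (simp add: a_def A_def power_mult_distrib)
  also have "(1/a)^(2*m) = - 1 / of_real A"
    by (simp add: power_one_over a_power)
  also have "(- of_real A + - 1 / of_real A)/2 = (of_real (- (A + 1/A)/2) :: complex)"
    using \<open>A > 0\<close> by (simp add: field_simps)
  finally have "rT_denom S m (zT S m j) = of_real (alphaT S m + betaT S m * (- (A + 1/A)/2))"
    by (simp add: rT_denom_def)
  moreover have "A - 1/A \<noteq> 0"
    using betaT_pos_alphaT_gt_betaT(1)[OF assms] unfolding alphaT_betaT_power A_def[symmetric]
    by auto
  then have "alphaT S m + betaT S m * (- (A + 1/A)/2) = 0"
    unfolding alphaT_betaT_power A_def[symmetric] by (simp add: field_simps)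
  ultimately show ?thesis
    by (metis of_real_0)
qed

lemma joukowski_ne_zT:
  assumes "S > 1" "\<zeta> \<noteq> 0" "(\<zeta> + 1/\<zeta>) / of_real (S + 1/S) \<noteq> zT S m j"
  shows "of_real S * omegaT m j \<noteq> \<zeta>" and "of_real S * omegaT m j * \<zeta> \<noteq> 1"
proof -
  define a where "a = of_real S * omegaT m j"
  have "a \<noteq> 0" using assms(1) by (simp add: a_def omegaT_nonzero)
  have zT: "zT S m j = (a + 1/a) / of_real (S + 1/S)"
    unfolding a_def by (rule zT_wT_eq)
  show "a \<noteq> \<zeta>" using assms(3) by (auto simp: zT)
  show "a * \<zeta> \<noteq> 1"
  proof
    assume "a * \<zeta> = 1"
    then have "\<zeta> = 1/a" "1/\<zeta> = a" using \<open>a \<noteq> 0\<close> \<open>\<zeta> \<noteq> 0\<close> by (auto simp: field_simps)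
    then show False using assms(3) by (auto simp: zT add.commute)
  qed
qed

lemma rT_partial_fractions:
  assumes "S > 1" "\<zeta> \<noteq> 0" "\<forall>j\<in>{1..2*m}. (\<zeta> + 1/\<zeta>) / of_real (S + 1/S) \<noteq> zT S m j"
  shows "rT S m ((\<zeta> + 1/\<zeta>) / of_real (S + 1/S)) = (1 / of_nat (2*m)) *
           ((\<Sum>j=1..2*m. 1/(1 - (\<zeta> / of_real S) / omegaT m j))
          - (\<Sum>j=1..2*m. 1/(1 - (of_real S * \<zeta>) * omegaT m j)))"
proof -
  define K where "K = complex_of_real (S + 1/S)"
  define a where "a j = of_real S * omegaT m j" for j
  have "S + 1/S > 0" using assms(1) by (simp add: add_pos_pos)
  then have "K \<noteq> 0" by (simp add: K_def del: of_real_add)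
  have "a j \<noteq> 0" for j using assms(1) by (simp add: a_def omegaT_nonzero)
  have "wT S m j / (zT S m j - (\<zeta> + 1/\<zeta>)/K)
      = (1 / of_nat (2*m)) * (1/(1 - (\<zeta> / of_real S) / omegaT m j) - 1/(1 - (of_real S * \<zeta>) * omegaT m j))"
    if "j \<in> {1..2*m}" for j
  proof -
    have "wT S m j / (zT S m j - (\<zeta> + 1/\<zeta>)/K) = (1 / of_nat (2*m)) * (1/(1 - \<zeta> / a j) - 1/(1 - a j * \<zeta>))"
      unfolding zT_wT_eq times_divide_eq_right[symmetric] a_def[symmetric] K_def[symmetric]
      using partial_fraction_joukowski[OF \<open>a j \<noteq> 0\<close> \<open>\<zeta> \<noteq> 0\<close> _ _ \<open>K \<noteq> 0\<close>]
        joukowski_ne_zT[OF assms(1,2)] assms(3) that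
      by (simp add: a_def K_def)
    then show ?thesis by (simp add: a_def mult_ac)
  qed
  then show ?thesis
    unfolding rT_def K_def by (simp add: sum_distrib_left sum_subtractf right_diff_distrib)
qed

lemma rT_joukowski:
  assumes "m \<ge> 1" "S > 1" "\<zeta> \<noteq> 0" "\<forall>j\<in>{1..2*m}. (\<zeta> + 1/\<zeta>) / of_real (S + 1/S) \<noteq> zT S m j"
  defines "X \<equiv> \<zeta> / of_real S" and "Y \<equiv> of_real S * \<zeta>"
  shows "1 + X^(2*m) \<noteq> 0" and "1 + Y^(2*m) \<noteq> 0"
    and "rT S m ((\<zeta> + 1/\<zeta>) / of_real (S + 1/S)) = 1/(1 + X^(2*m)) - 1/(1 + Y^(2*m))"
proof -
  have "(of_nat (2*m) :: complex) \<noteq> 0" using assms(1) by simp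
  have "X / omegaT m j \<noteq> 1" "Y * omegaT m j \<noteq> 1" if "j \<in> {1..2*m}" for j
  proof -
    have "of_real S * omegaT m j \<noteq> 0" using assms(2) by (simp add: omegaT_nonzero)
    moreover have "X / omegaT m j = \<zeta> / (of_real S * omegaT m j)"
      and "Y * omegaT m j = of_real S * omegaT m j * \<zeta>"
      by (simp_all add: X_def Y_def mult_ac)
    moreover note joukowski_ne_zT[OF assms(2,3) assms(4)[rule_format, OF that]]
    ultimately show "X / omegaT m j \<noteq> 1" "Y * omegaT m j \<noteq> 1"
      by (simp_all add: divide_eq_1_iff mult_ac)
  qed
  then have X_sum: "(1 + X^(2*m)) * (\<Sum>j=1..2*m. 1/(1 - X / omegaT m j)) = of_nat (2*m)"
    and Y_sum: "(1 + Y^(2*m)) * (\<Sum>j=1..2*m. 1/(1 - Y * omegaT m j)) = of_nat (2*m)"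
    using sum_inverse_one_minus_div_omegaT sum_inverse_one_minus_mult_omegaT assms(1) by blast+
  show "1 + X^(2*m) \<noteq> 0" "1 + Y^(2*m) \<noteq> 0"
    using X_sum Y_sum \<open>of_nat (2*m) \<noteq> 0\<close> by auto
  then have "(\<Sum>j=1..2*m. 1/(1 - X / omegaT m j)) = of_nat (2*m) / (1 + X^(2*m))"
    and "(\<Sum>j=1..2*m. 1/(1 - Y * omegaT m j)) = of_nat (2*m) / (1 + Y^(2*m))"
    using X_sum Y_sum by (metis nonzero_eq_divide_eq mult.commute)+
  then show "rT S m ((\<zeta> + 1/\<zeta>) / of_real (S + 1/S)) = 1/(1 + X^(2*m)) - 1/(1 + Y^(2*m))"
    unfolding rT_partial_fractions[OF assms(2,3,4)] X_def[symmetric] Y_def[symmetric]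
    using \<open>of_nat (2*m) \<noteq> 0\<close> by (simp add: right_diff_distrib)
qed

lemma rT_eq_inverse_rT_denom:
  assumes "m \<ge> 1" "S > 1" and off_nodes: "\<forall>j\<in>{1..2*m}. z \<noteq> zT S m j"
  shows "rT_denom S m z \<noteq> 0" and "rT S m z = 1 / rT_denom S m z"
proof -
  define K where "K = complex_of_real (S + 1/S)"
  have "S + 1/S > 0" using assms(2) by (simp add: add_pos_pos)
  then have "K \<noteq> 0" by (simp add: K_def del: of_real_add)
  obtain \<zeta> where "\<zeta> \<noteq> 0" and \<zeta>: "of_real ((S + 1/S)/2) * z = (\<zeta> + 1/\<zeta>)/2"
    using joukowski_surj by blast
  have "of_real ((S + 1/S)/2) = K/2" by (simp add: K_def)
  with \<zeta> have "K/2 * z = (\<zeta> + 1/\<zeta>)/2" by (simp only:)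
  then have "z = (\<zeta> + 1/\<zeta>) / K"
    using \<open>K \<noteq> 0\<close> by (simp add: field_simps)
  then have z: "z = (\<zeta> + 1/\<zeta>) / of_real (S + 1/S)"
    unfolding K_def .
  note r = rT_joukowski[OF assms(1,2) \<open>\<zeta> \<noteq> 0\<close> off_nodes[unfolded z], folded z]
  define A Z where "A = complex_of_real (S^(2*m))" and "Z = \<zeta>^(2*m)"
  have X_power: "(\<zeta> / of_real S)^(2*m) = Z / A" and Y_power: "(of_real S * \<zeta>)^(2*m) = A * Z"
    by (simp_all add: A_def Z_def power_divide power_mult_distrib)
  have cheb: "chebT (2*m) (of_real ((S + 1/S)/2) * z) = (Z + 1/Z)/2"
    unfolding \<zeta> chebT_joukowski[OF \<open>\<zeta> \<noteq> 0\<close>] by (simp add: Z_def power_one_over)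
  have denom: "rT_denom S m z = (A + 1/A)/(A - 1/A) + 2/(A - 1/A) * ((Z + 1/Z)/2)"
    unfolding rT_denom_def cheb by (simp add: alphaT_betaT_power A_def)
  have "S^(2*m) > 1" using assms by (simp add: one_less_power)
  then have "A \<noteq> 0" "A * A \<noteq> 1"
    unfolding A_def by (metis of_real_eq_0_iff not_one_less_zero,
                        metis of_real_mult of_real_eq_1_iff less_1_mult less_irrefl)
  moreover have "Z \<noteq> 0" using \<open>\<zeta> \<noteq> 0\<close> by (simp add: Z_def)
  ultimately show "rT_denom S m z \<noteq> 0" and "rT S m z = 1 / rT_denom S m z"
    using difference_of_reciprocals_eq[of A Z] r
    unfolding denom X_power Y_power by auto
qed

lemma rT_denom_eq_zero_iff:
  assumes "m \<ge> 1" "S > 1"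
  shows "rT_denom S m z = 0 \<longleftrightarrow> (\<exists>j\<in>{1..2*m}. z = zT S m j)"
  using rT_eq_inverse_rT_denom(1)[OF assms] rT_denom_zT[OF assms] by blast

lemma rT_eq_inverse_poly:
  assumes "m \<ge> 1" "S > 1"
  shows "\<exists>q :: complex poly. degree q = 2*m
           \<and> (\<forall>z. poly q z = 0 \<longleftrightarrow> (\<exists>j\<in>{1..2*m}. z = zT S m j))
           \<and> (\<forall>z. poly q z \<noteq> 0 \<longrightarrow> rT S m z = 1 / poly q z)"
proof -
  define c where "c = complex_of_real ((S + 1/S)/2)"
  define q where "q = [:of_real (alphaT S m):] + smult (of_real (betaT S m)) (cheb_poly (2*m) \<circ>\<^sub>p [:0, c:])"
  have "S + 1/S > 0" using assms(2) by (simp add: add_pos_pos)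
  then have "c \<noteq> 0" by (simp add: c_def del: of_real_add)
  have "betaT S m \<noteq> 0" using betaT_pos_alphaT_gt_betaT(1)[OF assms] by simp
  have poly_q: "poly q z = rT_denom S m z" for z
    by (simp add: q_def rT_denom_def poly_pcompose chebT_eq_poly_cheb_poly c_def mult.commute)
  have "degree (smult (of_real (betaT S m)) (cheb_poly (2*m) \<circ>\<^sub>p [:0, c:])) = 2*m"
    using \<open>c \<noteq> 0\<close> \<open>betaT S m \<noteq> 0\<close> by (simp add: degree_pcompose degree_cheb_poly)
  then have "degree q = 2*m"
    unfolding q_def using assms(1) by (subst degree_add_eq_right) auto
  then show ?thesis
    using rT_denom_eq_zero_iff[OF assms] rT_eq_inverse_rT_denom(2)[OF assms]
    by (intro exI[of _ q]) (auto simp: poly_q)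
qed

lemma rT_of_real:
  assumes "m \<ge> 1" "S > 1" "\<bar>(S + 1/S)/2 * x\<bar> \<le> 1"
  shows "rT S m (of_real x) = of_real (1 / (alphaT S m + betaT S m * cos (real (2*m) * arccos ((S + 1/S)/2 * x))))"
    and "alphaT S m + betaT S m * cos (real (2*m) * arccos ((S + 1/S)/2 * x)) \<in> {alphaT S m - betaT S m .. alphaT S m + betaT S m}"
proof -
  define t where "t = cos (real (2*m) * arccos ((S + 1/S)/2 * x))"
  have "chebT (2*m) (of_real ((S + 1/S)/2) * of_real x) = of_real t"
    unfolding of_real_mult[symmetric] t_def by (rule chebT_of_real[OF assms(3)])
  then have denom: "rT_denom S m (of_real x) = of_real (alphaT S m + betaT S m * t)"
    unfolding rT_denom_def by simp
  have "betaT S m > 0" "alphaT S m > betaT S m"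
    using betaT_pos_alphaT_gt_betaT[OF assms(1,2)] by auto
  moreover have "-1 \<le> t" "t \<le> 1" by (simp_all add: t_def)
  ultimately have "betaT S m * t \<in> {- betaT S m .. betaT S m}"
    using mult_left_mono[of "-1" t "betaT S m"] mult_left_mono[of t 1 "betaT S m"] by auto
  then show range: "alphaT S m + betaT S m * t \<in> {alphaT S m - betaT S m .. alphaT S m + betaT S m}"
    by auto
  have "rT_denom S m (of_real x) \<noteq> 0"
    using range \<open>alphaT S m > betaT S m\<close> unfolding denom of_real_eq_0_iff by auto
  then have "rT S m (of_real x) = 1 / rT_denom S m (of_real x)"
    using rT_eq_inverse_rT_denom(2)[OF assms(1,2)] rT_denom_eq_zero_iff[OF assms(1,2)] by blast
  also have "\<dots> = of_real (1 / (alphaT S m + betaT S m * t))"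
    unfolding denom by simp
  finally show "rT S m (of_real x) = of_real (1 / (alphaT S m + betaT S m * t))" .
qed

lemma abs_scaled_le_one_iff:
  fixes c x :: real
  assumes "c > 0"
  shows "\<bar>c * x\<bar> \<le> 1 \<longleftrightarrow> x \<in> {-1/c..1/c}"
  using assms by (auto simp: abs_le_iff field_simps)

lemma rT_real_bounds:
  assumes "m \<ge> 1" "S > 1" "x \<in> {-2/(S + 1/S)..2/(S + 1/S)}"
  shows "rT S m (of_real x) \<in> \<real>"
    and "1 / (alphaT S m + betaT S m) \<le> Re (rT S m (of_real x))"
    and "Re (rT S m (of_real x)) \<le> 1 / (alphaT S m - betaT S m)"
proof -
  have "(S + 1/S)/2 > 0" using assms(2) by (simp add: add_pos_pos)
  moreover have "x \<in> {-1/((S + 1/S)/2)..1/((S + 1/S)/2)}"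
    using assms(3) by simp
  ultimately have "\<bar>(S + 1/S)/2 * x\<bar> \<le> 1"
    by (simp only: abs_scaled_le_one_iff)
  note rT_x = rT_of_real[OF assms(1,2) this]
  have "alphaT S m > betaT S m" using betaT_pos_alphaT_gt_betaT[OF assms(1,2)] by simp
  with rT_x(2) show "rT S m (of_real x) \<in> \<real>"
    and "1 / (alphaT S m + betaT S m) \<le> Re (rT S m (of_real x))"
    and "Re (rT S m (of_real x)) \<le> 1 / (alphaT S m - betaT S m)"
    unfolding rT_x(1) by (auto intro!: divide_left_mono)
qed

lemma rT_equioscillation:
  assumes "m \<ge> 1" "S > 1"
  shows "\<exists>xs :: nat \<Rightarrow> real.
           (\<forall>k<2*m. xs k < xs (Suc k))
         \<and> (\<forall>k\<le>2*m. xs k \<in> {-2/(S + 1/S)..2/(S + 1/S)})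
         \<and> (\<forall>k\<le>2*m. rT S m (of_real (xs k)) =
               of_real (if even k then 1 / (alphaT S m + betaT S m) else 1 / (alphaT S m - betaT S m)))"
proof -
  define c where "c = (S + 1/S)/2"
  define u where "u k = real k * pi / real (2*m)" for k
  define xs where "xs k = - cos (u k) / c" for k
  have "c > 0" using assms(2) by (simp add: c_def add_pos_pos)
  have u_range: "0 \<le> u k" "u k \<le> pi" if "k \<le> 2*m" for k
    using that assms(1) by (auto simp: u_def field_simps)
  have "xs k < xs (Suc k)" if "k < 2*m" for k
  proof -
    have "u k < u (Suc k)" using assms(1) by (simp add: u_def divide_strict_right_mono)
    then have "cos (u (Suc k)) < cos (u k)"
      using u_range that by (intro cos_monotone_0_pi) auto
    then show ?thesis using \<open>c > 0\<close> by (simp add: xs_def divide_strict_right_mono)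
  qed
  moreover have "c * xs k = - cos (u k)" for k
    using \<open>c > 0\<close> by (simp add: xs_def)
  moreover have "xs k \<in> {-2/(S + 1/S)..2/(S + 1/S)}" for k
  proof -
    have "\<bar>c * xs k\<bar> \<le> 1" using \<open>c * xs k = - cos (u k)\<close> by simp
    then show ?thesis
      using abs_scaled_le_one_iff[OF \<open>c > 0\<close>] by (simp add: c_def)
  qed
  moreover have "rT S m (of_real (xs k)) =
      of_real (if even k then 1 / (alphaT S m + betaT S m) else 1 / (alphaT S m - betaT S m))"
    if "k \<le> 2*m" for k
  proof -
    have "real (2*m) * arccos (- cos (u k)) = real (2*m - k) * pi"
      using u_range[OF that] that assms(1) by (simp add: arccos_minus arccos_cos u_def field_simps of_nat_diff)
    moreover have "(-1::real) ^ (2*m - k) = (if even k then 1 else -1)"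
      using that by (auto simp: minus_one_power_iff)
    ultimately have "cos (real (2*m) * arccos (c * xs k)) = (if even k then 1 else -1)"
      unfolding \<open>c * xs k = - cos (u k)\<close> by simp
    moreover have "\<bar>c * xs k\<bar> \<le> 1" using \<open>c * xs k = - cos (u k)\<close> by simp
    ultimately show ?thesis
      using rT_of_real(1)[OF assms, of "xs k"] by (simp add: c_def)
  qed
  ultimately show ?thesis
    by (intro exI[of _ xs]) auto
qed

theorem lemma3p1:
  fixes m :: nat and S :: real
  assumes "m \<ge> 1" and "S > 1"
  shows
    "(\<forall>z::complex. (\<forall>j\<in>{1..2*m}. z \<noteq> zT S m j) \<longrightarrow>
        rT S m z = 1 / (of_real (alphaT S m) + of_real (betaT S m) * chebT (2*m) (of_real ((S + 1/S)/2) * z))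
      \<and> rT S m z = 1 / (of_real (alphaT S m - betaT S m)
                          + 2 * of_real (betaT S m) * (chebT m (of_real ((S + 1/S)/2) * z))\<^sup>2))
   \<and> (\<exists>q :: complex poly. degree q = 2*m
        \<and> (\<forall>z. poly q z = 0 \<longleftrightarrow> (\<exists>j\<in>{1..2*m}. z = zT S m j))
        \<and> (\<forall>z. poly q z \<noteq> 0 \<longrightarrow> rT S m z = 1 / poly q z))
   \<and> (\<forall>x\<in>{-2/(S + 1/S)..2/(S + 1/S)}.
        rT S m (of_real x) \<in> \<real>
        \<and> 1 / (alphaT S m + betaT S m) \<le> Re (rT S m (of_real x))
        \<and> Re (rT S m (of_real x)) \<le> 1 / (alphaT S m - betaT S m))
   \<and> (\<exists>xs :: nat \<Rightarrow> real.
        (\<forall>k<2*m. xs k < xs (Suc k))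
        \<and> (\<forall>k\<le>2*m. xs k \<in> {-2/(S + 1/S)..2/(S + 1/S)})
        \<and> ((\<forall>k\<le>2*m. rT S m (of_real (xs k)) =
               of_real (if even k then 1 / (alphaT S m + betaT S m) else 1 / (alphaT S m - betaT S m)))
         \<or> (\<forall>k\<le>2*m. rT S m (of_real (xs k)) =
               of_real (if even k then 1 / (alphaT S m - betaT S m) else 1 / (alphaT S m + betaT S m)))))"
proof -
  have "rT_denom S m z = of_real (alphaT S m - betaT S m)
      + 2 * of_real (betaT S m) * (chebT m (of_real ((S + 1/S)/2) * z))\<^sup>2" for z
    unfolding rT_denom_def chebT_double by (simp add: algebra_simps)
  then have closed_forms: "\<forall>z::complex. (\<forall>j\<in>{1..2*m}. z \<noteq> zT S m j) \<longrightarrow>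
        rT S m z = 1 / (of_real (alphaT S m) + of_real (betaT S m) * chebT (2*m) (of_real ((S + 1/S)/2) * z))
      \<and> rT S m z = 1 / (of_real (alphaT S m - betaT S m)
                          + 2 * of_real (betaT S m) * (chebT m (of_real ((S + 1/S)/2) * z))\<^sup>2)"
    using rT_eq_inverse_rT_denom(2)[OF assms] by (auto simp: rT_denom_def)
  show ?thesis
    using closed_forms rT_eq_inverse_poly[OF assms] rT_real_bounds[OF assms] rT_equioscillation[OF assms]
    by blast
qed

end
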